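(* Let $(M,d,\mu)$ be a quasi-$b$-geodesic metric measure space satisfying $(VD)_{\mathrm{loc}}$, $(VD)_\infty$ and the Poincaré inequality $(P)_h$ at scale $h$. Suppose that a Markov operator $P$ has a kernel $p$ that is $(h,h')$-compatible with respect to $\mu$ for some $h>b$. Then there exist $a>0$, $\epsilon_0>0$ such that $$\|P_{B(x,r)}\|_{2\to2}:=\sup_{f\in L^2(B(x,r)),\ \|f\|_2=1}\|P_{B(x,r)}f\|_2\le1-\frac{a}{r^2}$$ for all $x\in M$ and all real $r$ with $h'\le r\le\epsilon_0\operatorname{diam}(M)$.
   Context: Metric measure space: locally compact metric space with a Radon measure of full support; $B(x,r)$ closed balls, $V(x,r)=\mu(B(x,r))$. Quasi-$b$-geodesic: there is $C$ with $d_b\le Cd$, where $d_b(x,y)=\inf\sum_i d(x_i,x_{i+1})$ over sequences $x=x_0,\dots,x_m=y$ with $d(x_i,x_{i+1})\le b$. $(VD)_{\mathrm{loc}}$: for each $r>0$ there is $C_r$ with $V(x,2r)\le C_rV(x,r)$ for all $x$. $(VD)_\infty$: there are $r_0,C>0$ with $V(x,2r)\le CV(x,r)$ for all $x$, $r\ge r_0$. $|\nabla f|_h(x)=\left(\frac1{V(x,h)}\int_{B(x,h)}|f(y)-f(x)|^2\mu(dy)\right)^{1/2}$; $(P)_h$: there are $C_1>0$, $C_2\ge1$, $r_0>0$ with $\int_{B(x,r)}|f-f_{B(x,r)}|^2d\mu\le C_1r^2\int_{B(x,C_2r)}|\nabla f|_h^2d\mu$ for all $f\in L^\infty_{\mathrm{loc}}$,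 $x$, $r\ge r_0$. Kernel: $p_1\ge0$, $\int p_1(x,y)\mu(dy)=1$, $p_1(x,\cdot)\in L^\infty$, $Pf(x)=\int p_1(x,y)f(y)\mu(dy)$, $p_2(x,y)=\int p_1(x,z)p_1(y,z)\mu(dz)$. $(h,h')$-compatible: $p_1(x,y)=p_1(y,x)$ $\mu\times\mu$-a.e.; there are $c_1,C_1>0$, $h'\ge h$, with $\frac{c_1}{V(x,h)}\mathbf{1}_{B(x,h)}(y)\le p_1(x,y)\le\frac{C_1}{V(x,h')}\mathbf{1}_{B(x,h')}(y)$ for all $x$, $\mu$-a.e. $y$; there is $\alpha>0$ with $p_2\ge\alpha p_1$ ($\mu$-a.e.). For a ball $B$, $L^2(B)=L^2(B,\mu|_B)$ and $P_Bf(x)=\int_Bf(y)p_1(x,y)\mu(dy)$ for $x\in B$. $\operatorname{diam}(M)=\sup_{x,y}d(x,y)\in(0,\infty]$. *)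

theory Defs
  imports "HOL-Analysis.Analysis"
begin

definition radon_full_support :: "'a::metric_space measure \<Rightarrow> bool" where
  "radon_full_support M \<longleftrightarrow>
     sets M = sets borel \<and>
     (\<forall>K. compact K \<longrightarrow> emeasure M K < \<infinity>) \<and>
     (\<forall>U. open U \<longrightarrow> emeasure M U = (SUP K\<in>{K. compact K \<and> K \<subseteq> U}. emeasure M K)) \<and>
     (\<forall>A\<in>sets M. emeasure M A = (INF U\<in>{U. open U \<and> A \<subseteq> U}. emeasure M U)) \<and>
     (\<forall>U. open U \<longrightarrow> U \<noteq> {} \<longrightarrow> emeasure M U > 0)"

definition metric_measure_space :: "'a::metric_space measure \<Rightarrow> bool" where
  "metric_measure_space M \<longleftrightarrow> locally compact (UNIV :: 'a set) \<and> radon_full_support M"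

definition V :: "'a::metric_space measure \<Rightarrow> 'a \<Rightarrow> real \<Rightarrow> ennreal" where
  "V M x r = emeasure M (cball x r)"

definition chain_length :: "'a::metric_space list \<Rightarrow> real" where
  "chain_length xs = sum_list (map (\<lambda>(u,v). dist u v) (zip xs (tl xs)))"

definition b_chain :: "real \<Rightarrow> 'a::metric_space \<Rightarrow> 'a \<Rightarrow> 'a list \<Rightarrow> bool" where
  "b_chain b x y xs \<longleftrightarrow> xs \<noteq> [] \<and> hd xs = x \<and> last xs = y \<and>
     (\<forall>i. Suc i < length xs \<longrightarrow> dist (xs ! i) (xs ! Suc i) \<le> b)"

definition dist_b :: "real \<Rightarrow> 'a::metric_space \<Rightarrow> 'a \<Rightarrow> ereal" where
  "dist_b b x y = Inf {ereal (chain_length xs) | xs. b_chain b x y xs}"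

definition quasi_b_geodesic :: "real \<Rightarrow> 'a::metric_space itself \<Rightarrow> bool" where
  "quasi_b_geodesic b _ \<longleftrightarrow> (\<exists>C. \<forall>x y::'a. dist_b b x y \<le> ereal (C * dist x y))"

definition VD_loc :: "'a::metric_space measure \<Rightarrow> bool" where
  "VD_loc M \<longleftrightarrow> (\<forall>r>0. \<exists>C. \<forall>x. V M x (2*r) \<le> ennreal C * V M x r)"

definition VD_infty :: "'a::metric_space measure \<Rightarrow> bool" where
  "VD_infty M \<longleftrightarrow> (\<exists>r0>0. \<exists>C>0. \<forall>x. \<forall>r\<ge>r0. V M x (2*r) \<le> ennreal C * V M x r)"

definition L_infty_loc :: "'a::metric_space measure \<Rightarrow> ('a \<Rightarrow> real) \<Rightarrow> bool" where
  "L_infty_loc M f \<longleftrightarrow> f \<in> borel_measurable M \<and>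
     (\<forall>K. compact K \<longrightarrow> (\<exists>C. AE y in M. y \<in> K \<longrightarrow> \<bar>f y\<bar> \<le> C))"

definition grad_sq :: "'a::metric_space measure \<Rightarrow> real \<Rightarrow> ('a \<Rightarrow> real) \<Rightarrow> 'a \<Rightarrow> ennreal" where
  "grad_sq M h f x =
     (\<integral>\<^sup>+ y. indicator (cball x h) y * ennreal ((f y - f x)^2) \<partial>M) / V M x h"

definition ball_avg :: "'a::metric_space measure \<Rightarrow> ('a \<Rightarrow> real) \<Rightarrow> 'a set \<Rightarrow> real" where
  "ball_avg M f B = (LINT y:B|M. f y) / measure M B"

definition poincare_h :: "'a::metric_space measure \<Rightarrow> real \<Rightarrow> bool" where
  "poincare_h M h \<longleftrightarrow> (\<exists>C1>0. \<exists>C2\<ge>1. \<exists>r0>0. \<forall>f x r. L_infty_loc M f \<longrightarrow> r \<ge> r0 \<longrightarrow>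
     (\<integral>\<^sup>+ y. indicator (cball x r) y * ennreal ((f y - ball_avg M f (cball x r))^2) \<partial>M)
       \<le> ennreal (C1 * r^2) * (\<integral>\<^sup>+ y. indicator (cball x (C2*r)) y * grad_sq M h f y \<partial>M))"

definition markov_kernel :: "'a::metric_space measure \<Rightarrow> ('a \<Rightarrow> 'a \<Rightarrow> real) \<Rightarrow> bool" where
  "markov_kernel M p \<longleftrightarrow>
     (\<lambda>z. p (fst z) (snd z)) \<in> borel_measurable (M \<Otimes>\<^sub>M M) \<and>
     (\<forall>x y. p x y \<ge> 0) \<and>
     (\<forall>x. (\<integral>\<^sup>+ y. ennreal (p x y) \<partial>M) = 1) \<and>
     (\<forall>x. \<exists>C. AE y in M. \<bar>p x y\<bar> \<le> C)"

definition p2 :: "'a::metric_space measure \<Rightarrow> ('a \<Rightarrow> 'a \<Rightarrow> real) \<Rightarrow> 'a \<Rightarrow> 'a \<Rightarrow> real" where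
  "p2 M p x y = (\<integral> z. p x z * p y z \<partial>M)"

definition compatible :: "'a::metric_space measure \<Rightarrow> ('a \<Rightarrow> 'a \<Rightarrow> real) \<Rightarrow> real \<Rightarrow> real \<Rightarrow> bool" where
  "compatible M p h h' \<longleftrightarrow>
     (AE z in M \<Otimes>\<^sub>M M. p (fst z) (snd z) = p (snd z) (fst z)) \<and>
     h' \<ge> h \<and>
     (\<exists>c1>0. \<exists>C1>0. \<forall>x. AE y in M.
        c1 / measure M (cball x h) * indicator (cball x h) y \<le> p x y \<and>
        p x y \<le> C1 / measure M (cball x h') * indicator (cball x h') y) \<and>
     (\<exists>\<alpha>>0. AE z in M \<Otimes>\<^sub>M M. p2 M p (fst z) (snd z) \<ge> \<alpha> * p (fst z) (snd z))"

definition in_L2_on :: "'a::metric_space measure \<Rightarrow> 'a set \<Rightarrow> ('a \<Rightarrow> real) \<Rightarrow> bool" where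
  "in_L2_on M B f \<longleftrightarrow> f \<in> borel_measurable M \<and> set_integrable M B (\<lambda>y. (f y)^2)"

definition L2_norm_on :: "'a::metric_space measure \<Rightarrow> 'a set \<Rightarrow> ('a \<Rightarrow> real) \<Rightarrow> real" where
  "L2_norm_on M B f = sqrt (LINT y:B|M. (f y)^2)"

definition P_on :: "'a::metric_space measure \<Rightarrow> ('a \<Rightarrow> 'a \<Rightarrow> real) \<Rightarrow> 'a set \<Rightarrow> ('a \<Rightarrow> real) \<Rightarrow> 'a \<Rightarrow> real" where
  "P_on M p B f x = (LINT y:B|M. f y * p x y)"

definition op_norm_on :: "'a::metric_space measure \<Rightarrow> ('a \<Rightarrow> 'a \<Rightarrow> real) \<Rightarrow> 'a set \<Rightarrow> ereal" where
  "op_norm_on M p B =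
     (SUP f\<in>{f. in_L2_on M B f \<and> L2_norm_on M B f = 1}. ereal (L2_norm_on M B (P_on M p B f)))"

definition diamM :: "'a::metric_space itself \<Rightarrow> ereal" where
  "diamM _ = (SUP xy\<in>(UNIV::('a\<times>'a) set). ereal (dist (fst xy) (snd xy)))"

end

theory Submission
  imports Defs
begin

text \<open>
  Let \<open>f\<close> be normalised in \<open>L\<^sup>2(B)\<close>, \<open>B = B(x,r)\<close>, and \<open>g = 1\<^sub>B f\<close>. For the symmetric Markov kernel
  the variance identity reads \<open>\<parallel>P g\<parallel>\<^sup>2 = 1 - V\<close>, where \<open>V = \<integral>\<integral> p(z,y) (g y - P g z)\<^sup>2\<close> is the
  conditional variance, so it suffices to bound \<open>V\<close> from below by \<open>c/r\<^sup>2\<close>.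
  Quasi-geodesicity and \<open>(VD)\<^sub>\<infinity>\<close> yield reverse doubling: as long as \<open>r \<lesssim> diam M\<close>, some ball
  \<open>B(x,R)\<close> with \<open>R \<simeq> r\<close> has at least twice the volume of \<open>B\<close>. Since \<open>g\<close> vanishes on \<open>B(x,R) - B\<close>,
  the Poincar\'e inequality on \<open>B(x,R)\<close> gives \<open>1 = \<integral> g\<^sup>2 \<lesssim> R\<^sup>2 \<integral> |\<nabla>g|\<^sub>h\<^sup>2\<close>. The lower kernel bound,
  the domination \<open>\<alpha> p \<le> p\<^sub>2\<close> and the splitting \<open>(g y - g x)\<^sup>2 \<le> 2(g x - P g z)\<^sup>2 + 2(g y - P g z)\<^sup>2\<close>
  bound the gradient energy by a multiple of \<open>V\<close>. Hence \<open>V \<greatersim> r\<^sup>-\<^sup>2\<close> and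
  \<open>\<parallel>P\<^sub>B f\<parallel> \<le> \<surd>(1 - V) \<le> 1 - V/2\<close>.
\<close>

section \<open>Points at prescribed distance in quasi-geodesic spaces\<close>

lemma b_chain_point_at_distance:
  fixes x :: "'a::metric_space"
  assumes "xs \<noteq> []" "hd xs = x"
    and steps: "\<forall>i. Suc i < length xs \<longrightarrow> dist (xs!i) (xs!Suc i) \<le> b"
    and "0 \<le> t" "t \<le> dist x (last xs)" "0 \<le> b"
  shows "\<exists>y. t \<le> dist x y \<and> dist x y \<le> t + b"
proof (cases "t = 0")
  case True
  then show ?thesis using \<open>0 \<le> b\<close> by (intro exI[of _ x]) simp
next
  case False
  let ?far = "\<lambda>i. i < length xs \<and> t \<le> dist x (xs!i)"
  have "?far (length xs - 1)" using assms by (simp add: last_conv_nth)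
  then have far_i: "?far (LEAST i. ?far i)" by (rule LeastI)
  have "(LEAST i. ?far i) \<noteq> 0"
  proof
    assume "(LEAST i. ?far i) = 0"
    then have "xs!(LEAST i. ?far i) = x" using assms(1,2) by (simp add: hd_conv_nth)
    then show False using far_i False \<open>0 \<le> t\<close> by simp
  qed
  then obtain j where j: "(LEAST i. ?far i) = Suc j" using not0_implies_Suc by blast
  then have "dist x (xs!j) < t" using far_i not_less_Least[of j ?far] by auto
  moreover have "dist (xs!j) (xs!Suc j) \<le> b" using steps far_i j by auto
  ultimately have "dist x (xs!Suc j) \<le> t + b" using dist_triangle[of x "xs!Suc j" "xs!j"] by linarith
  then show ?thesis using far_i j by auto
qed

lemma quasi_b_geodesic_ex_b_chain:
  fixes x z :: "'a::metric_space"
  assumes "quasi_b_geodesic b TYPE('a)"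
  shows "\<exists>xs. b_chain b x z xs"
proof (rule ccontr)
  assume "\<nexists>xs. b_chain b x z xs"
  then have "dist_b b x z = \<infinity>" by (simp add: dist_b_def top_ereal_def)
  moreover obtain C where "\<forall>x y::'a. dist_b b x y \<le> ereal (C * dist x y)"
    using assms unfolding quasi_b_geodesic_def by blast
  ultimately show False by (metis PInfty_neq_ereal(1) ereal_infty_less_eq(1))
qed

lemma quasi_b_geodesic_point_at_distance:
  fixes x z :: "'a::metric_space"
  assumes "quasi_b_geodesic b TYPE('a)" "0 \<le> b" "0 \<le> t" "t \<le> dist x z"
  shows "\<exists>y. t \<le> dist x y \<and> dist x y \<le> t + b"
proof -
  obtain xs where "b_chain b x z xs" using quasi_b_geodesic_ex_b_chain[OF assms(1)] by blast
  then show ?thesis unfolding b_chain_def using b_chain_point_at_distance[of xs x b t] assms by auto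
qed

lemma power2_diff_le_sum: "((v::real) - u)^2 \<le> 2 * (u - w)^2 + 2 * (v - w)^2"
proof -
  have "2 * (u - w)^2 + 2 * (v - w)^2 - (v - u)^2 = (u + v - 2*w)^2"
    by (simp add: power2_eq_square algebra_simps)
  then show ?thesis by (metis diff_ge_0_iff_ge zero_le_power2)
qed

lemma sqrt_le_one_minus_half:
  fixes w t :: real
  assumes "0 \<le> w" "0 \<le> t" "w + t \<le> 1"
  shows "sqrt w \<le> 1 - t / 2"
proof -
  have "(1 - t/2)^2 = 1 - t + t^2/4" by (simp add: power2_eq_square field_simps)
  then have "w \<le> (1 - t/2)^2" "0 \<le> 1 - t/2"
    using assms zero_le_power2[of t] by linarith+
  then show ?thesis by (simp add: real_le_lsqrt)
qed

definition clip :: "real \<Rightarrow> real \<Rightarrow> real" where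
  "clip n t = max (-n) (min n t)"

lemma abs_clip: "0 \<le> n \<Longrightarrow> \<bar>clip n t\<bar> = min n \<bar>t\<bar>"
  by (cases "t \<ge> 0") (auto simp: clip_def max_def min_def)

lemma abs_clip_diff_le: "\<bar>clip n t - clip n s\<bar> \<le> \<bar>t - s\<bar>"
  by (auto simp: clip_def max_def min_def abs_if)

lemma clip_eq_self: "\<bar>t\<bar> \<le> n \<Longrightarrow> clip n t = t"
  by (auto simp: clip_def max_def min_def)

lemma nn_integral_square_eq_SUP_clip:
  fixes g :: "'a \<Rightarrow> real"
  assumes [measurable]: "g \<in> borel_measurable M"
  shows "(\<integral>\<^sup>+y. ennreal ((g y)^2) \<partial>M) = (SUP n::nat. \<integral>\<^sup>+y. ennreal ((clip n (g y))^2) \<partial>M)"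
proof -
  define F where "F n y = ennreal ((clip (real n) (g y))^2)" for n y
  have inc: "incseq F"
    by (intro incseq_SucI le_funI) (simp add: F_def abs_clip abs_le_square_iff[symmetric])
  have "(SUP n. F n y) = ennreal ((g y)^2)" for y
  proof (rule antisym)
    show "(SUP n. F n y) \<le> ennreal ((g y)^2)"
      by (intro SUP_least) (simp add: F_def abs_clip abs_le_square_iff[symmetric])
    obtain n :: nat where "\<bar>g y\<bar> \<le> real n" using real_nat_ceiling_ge by blast
    then show "ennreal ((g y)^2) \<le> (SUP n. F n y)"
      by (intro SUP_upper2[of n]) (simp_all add: F_def clip_eq_self)
  qed
  then have "(\<integral>\<^sup>+y. ennreal ((g y)^2) \<partial>M) = (\<integral>\<^sup>+y. (SUP n. F n y) \<partial>M)" by simp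
  also have "\<dots> = (SUP n. \<integral>\<^sup>+y. F n y \<partial>M)"
    by (rule nn_integral_monotone_convergence_SUP[OF inc]) (unfold F_def clip_def, measurable)
  finally show ?thesis by (simp add: F_def)
qed

lemma nn_integral_square_le_deviation:
  fixes g :: "'a \<Rightarrow> real"
  assumes [measurable]: "g \<in> borel_measurable M" "A \<in> sets M" "B \<in> sets M"
    and "A \<subseteq> B" "emeasure M B < \<infinity>"
    and supp: "\<And>y. y \<notin> A \<Longrightarrow> g y = 0"
    and dbl: "2 * measure M A \<le> measure M B"
  shows "(\<integral>\<^sup>+y. ennreal ((g y)^2) \<partial>M) \<le> 2 * (\<integral>\<^sup>+y. indicator B y * ennreal ((g y - a)^2) \<partial>M)"
proof -
  let ?dev = "\<lambda>S. \<integral>\<^sup>+y. indicator S y * ennreal ((g y - a)^2) \<partial>M"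
  have fin: "emeasure M S \<noteq> \<infinity>" if "S \<subseteq> B" "S \<in> sets M" for S
    using emeasure_mono[OF that(1) \<open>B \<in> sets M\<close>] \<open>emeasure M B < \<infinity>\<close> by (auto simp: top_unique)
  \<comment> \<open>The constant \<open>a\<close> costs \<open>a\<^sup>2 \<mu>(A) \<le> a\<^sup>2 \<mu>(B - A)\<close>, and on \<open>B - A\<close> the deviation is exactly \<open>a\<^sup>2\<close>.\<close>
  have "measure M A \<le> measure M (B - A)"
    using dbl measure_Diff[OF fin[OF order_refl] _ _ \<open>A \<subseteq> B\<close>] by simp
  then have "emeasure M A \<le> emeasure M (B - A)"
    using fin[of A] fin[of "B - A"] \<open>A \<subseteq> B\<close> by (simp add: emeasure_eq_ennreal_measure ennreal_leI)
  moreover have "?dev (B - A) = (\<integral>\<^sup>+y. ennreal (a^2) * indicator (B - A) y \<partial>M)"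
    by (intro nn_integral_cong) (auto simp: supp indicator_def)
  moreover have "\<dots> = ennreal (a^2) * emeasure M (B - A)"
    by (rule nn_integral_cmult_indicator) simp
  ultimately have A_le: "ennreal (a^2) * emeasure M A \<le> ?dev (B - A)"
    by (simp add: mult_left_mono)
  have "(\<integral>\<^sup>+y. ennreal ((g y)^2) \<partial>M)
      \<le> (\<integral>\<^sup>+y. 2 * (indicator A y * ennreal ((g y - a)^2)) + 2 * (ennreal (a^2) * indicator A y) \<partial>M)"
  proof (intro nn_integral_mono)
    fix y
    have "(g y)^2 \<le> 2 * (g y - a)^2 + 2 * a^2"
      using power2_diff_le_sum[of "g y" 0 a] by (simp add: power2_commute)
    then have "ennreal ((g y)^2) \<le> ennreal (2 * (g y - a)^2 + 2 * a^2)" by (rule ennreal_leI)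
    also have "\<dots> = 2 * ennreal ((g y - a)^2) + 2 * ennreal (a^2)" by (simp add: ennreal_plus ennreal_mult)
    finally show "ennreal ((g y)^2) \<le> 2 * (indicator A y * ennreal ((g y - a)^2)) + 2 * (ennreal (a^2) * indicator A y)"
      using supp[of y] by (auto simp: indicator_def)
  qed
  also have "\<dots> = 2 * ?dev A + 2 * (ennreal (a^2) * emeasure M A)"
    by (simp add: nn_integral_add nn_integral_cmult)
  also have "\<dots> \<le> 2 * ?dev A + 2 * ?dev (B - A)"
    by (intro add_left_mono mult_left_mono A_le) simp
  also have "\<dots> = 2 * ?dev B"
    by (simp add: distrib_left[symmetric] nn_integral_add[symmetric] del: distrib_left)
       (intro arg_cong[where f = "\<lambda>x. 2 * x"] nn_integral_cong, use \<open>A \<subseteq> B\<close> in \<open>auto simp: indicator_def\<close>)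
  finally show ?thesis .
qed

lemma grad_sq_mono:
  assumes "\<And>z. \<bar>f z - f y\<bar> \<le> \<bar>g z - g y\<bar>"
  shows "grad_sq M h f y \<le> grad_sq M h g y"
  unfolding grad_sq_def
proof (intro divide_right_mono_ennreal nn_integral_mono)
  fix z
  have "(f z - f y)^2 \<le> (g z - g y)^2" using assms[of z] by (simp add: abs_le_square_iff)
  then show "indicator (cball y h) z * ennreal ((f z - f y)^2) \<le> indicator (cball y h) z * ennreal ((g z - g y)^2)"
    by (intro mult_left_mono ennreal_leI) auto
qed

lemma ennreal_integral_le_nn_integral:
  fixes f :: "'a \<Rightarrow> real"
  assumes "AE x in M. 0 \<le> f x"
  shows "ennreal (\<integral>x. f x \<partial>M) \<le> (\<integral>\<^sup>+x. ennreal (f x) \<partial>M)"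
  using nn_integral_eq_integral[OF _ assms] by (cases "integrable M f") (simp_all add: not_integrable_integral_eq)

section \<open>Symmetric Markov kernels\<close>

definition markov_op :: "'a measure \<Rightarrow> ('a \<Rightarrow> 'a \<Rightarrow> real) \<Rightarrow> ('a \<Rightarrow> real) \<Rightarrow> 'a \<Rightarrow> real" where
  "markov_op M p g x = (\<integral>y. g y * p x y \<partial>M)"

definition kernel_energy :: "'a measure \<Rightarrow> ('a \<Rightarrow> 'a \<Rightarrow> real) \<Rightarrow> ('a \<Rightarrow> real) \<Rightarrow> ennreal" where
  "kernel_energy M p g = (\<integral>\<^sup>+x. \<integral>\<^sup>+y. ennreal (p x y) * ennreal ((g y - g x)^2) \<partial>M \<partial>M)"

definition two_step_energy :: "'a measure \<Rightarrow> ('a \<Rightarrow> 'a \<Rightarrow> real) \<Rightarrow> ('a \<Rightarrow> real) \<Rightarrow> ennreal" where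
  "two_step_energy M p g =
     (\<integral>\<^sup>+x. \<integral>\<^sup>+y. \<integral>\<^sup>+z. ennreal (p x z) * ennreal (p y z) * ennreal ((g y - g x)^2) \<partial>M \<partial>M \<partial>M)"

definition conditional_variance :: "'a measure \<Rightarrow> ('a \<Rightarrow> 'a \<Rightarrow> real) \<Rightarrow> ('a \<Rightarrow> real) \<Rightarrow> ennreal" where
  "conditional_variance M p g =
     (\<integral>\<^sup>+z. \<integral>\<^sup>+x. ennreal (p z x) * ennreal ((g x - markov_op M p g z)^2) \<partial>M \<partial>M)"

locale symmetric_markov_kernel = sigma_finite_measure M
  for M :: "'a measure" +
  fixes p :: "'a \<Rightarrow> 'a \<Rightarrow> real"
  assumes space_eq_UNIV[simp]: "space M = UNIV"
    and kernel_measurable: "(\<lambda>z. p (fst z) (snd z)) \<in> borel_measurable (M \<Otimes>\<^sub>M M)"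
    and kernel_nonneg: "0 \<le> p x y"
    and kernel_mass: "(\<integral>\<^sup>+y. ennreal (p x y) \<partial>M) = 1"
    and kernel_ess_bounded: "\<exists>C. AE y in M. \<bar>p x y\<bar> \<le> C"
    and kernel_symmetric: "AE z in M \<Otimes>\<^sub>M M. p (fst z) (snd z) = p (snd z) (fst z)"
begin

sublocale PP: pair_sigma_finite M M ..

lemma kernel_measurable_compose[measurable (raw)]:
  assumes "f \<in> measurable N M" "g \<in> measurable N M"
  shows "(\<lambda>w. p (f w) (g w)) \<in> borel_measurable N"
  using measurable_compose[OF measurable_Pair[OF assms] kernel_measurable] by simp

lemma markov_op_measurable[measurable]:
  assumes [measurable]: "g \<in> borel_measurable M"
  shows "markov_op M p g \<in> borel_measurable M"
  unfolding markov_op_def by measurable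

lemma integrable_kernel: "integrable M (p x)"
  by (rule integrableI_nonneg) (use kernel_mass[of x] kernel_nonneg in auto)

lemma integral_kernel: "(\<integral>y. p x y \<partial>M) = 1"
  using nn_integral_eq_integral[OF integrable_kernel] kernel_mass[of x] kernel_nonneg by simp

lemma nn_integral_commute:
  assumes "(\<lambda>(x, y). F x y) \<in> borel_measurable (M \<Otimes>\<^sub>M M)"
  shows "(\<integral>\<^sup>+x. \<integral>\<^sup>+y. F x y \<partial>M \<partial>M) = (\<integral>\<^sup>+y. \<integral>\<^sup>+x. F x y \<partial>M \<partial>M)"
  using PP.Fubini[OF assms] by simp

lemma nn_integral_iterated:
  assumes "(\<lambda>(x, y). F x y) \<in> borel_measurable (M \<Otimes>\<^sub>M M)"
  shows "(\<integral>\<^sup>+x. \<integral>\<^sup>+y. F x y \<partial>M \<partial>M) = (\<integral>\<^sup>+z. F (fst z) (snd z) \<partial>(M \<Otimes>\<^sub>M M))"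
  using nn_integral_fst[OF assms] by (simp add: case_prod_beta')

lemma nn_integral_iterated3:
  assumes F: "(\<lambda>u. F (fst (fst u)) (snd (fst u)) (snd u)) \<in> borel_measurable ((M \<Otimes>\<^sub>M M) \<Otimes>\<^sub>M M)"
  shows "(\<integral>\<^sup>+x. \<integral>\<^sup>+y. \<integral>\<^sup>+z. F x y z \<partial>M \<partial>M \<partial>M)
       = (\<integral>\<^sup>+u. F (fst (fst u)) (snd (fst u)) (snd u) \<partial>((M \<Otimes>\<^sub>M M) \<Otimes>\<^sub>M M))"
proof -
  have "(\<lambda>(x, y). \<integral>\<^sup>+z. F x y z \<partial>M) \<in> borel_measurable (M \<Otimes>\<^sub>M M)"
    using borel_measurable_nn_integral_fst[OF F] by (simp add: case_prod_beta')
  then show ?thesis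
    using nn_integral_fst[OF F] by (simp add: nn_integral_iterated)
qed

lemma nn_integral_kernel_swap:
  assumes [measurable]: "(\<lambda>(x, y). H x y) \<in> borel_measurable (M \<Otimes>\<^sub>M M)"
  shows "(\<integral>\<^sup>+x. \<integral>\<^sup>+y. ennreal (p x y) * H x y \<partial>M \<partial>M) = (\<integral>\<^sup>+x. \<integral>\<^sup>+y. ennreal (p y x) * H x y \<partial>M \<partial>M)"
proof -
  have [measurable]: "(\<lambda>z. H (fst z) (snd z)) \<in> borel_measurable (M \<Otimes>\<^sub>M M)"
    using assms by (simp add: case_prod_beta')
  have "(\<integral>\<^sup>+x. \<integral>\<^sup>+y. ennreal (p x y) * H x y \<partial>M \<partial>M)
      = (\<integral>\<^sup>+z. ennreal (p (fst z) (snd z)) * H (fst z) (snd z) \<partial>(M \<Otimes>\<^sub>M M))"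
    by (rule nn_integral_iterated) measurable
  also have "\<dots> = (\<integral>\<^sup>+z. ennreal (p (snd z) (fst z)) * H (fst z) (snd z) \<partial>(M \<Otimes>\<^sub>M M))"
    by (rule nn_integral_cong_AE) (use kernel_symmetric in \<open>eventually_elim, simp\<close>)
  also have "\<dots> = (\<integral>\<^sup>+x. \<integral>\<^sup>+y. ennreal (p y x) * H x y \<partial>M \<partial>M)"
    by (rule nn_integral_iterated[symmetric]) measurable
  finally show ?thesis .
qed

lemma nn_integral_kernel_square:
  assumes [measurable]: "g \<in> borel_measurable M"
  shows "(\<integral>\<^sup>+z. \<integral>\<^sup>+x. ennreal (p z x) * ennreal ((g x)^2) \<partial>M \<partial>M) = (\<integral>\<^sup>+x. ennreal ((g x)^2) \<partial>M)"
proof -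
  have "(\<integral>\<^sup>+z. \<integral>\<^sup>+x. ennreal (p z x) * ennreal ((g x)^2) \<partial>M \<partial>M)
      = (\<integral>\<^sup>+z. \<integral>\<^sup>+x. ennreal (p x z) * ennreal ((g x)^2) \<partial>M \<partial>M)"
    by (rule nn_integral_kernel_swap) measurable
  also have "\<dots> = (\<integral>\<^sup>+x. \<integral>\<^sup>+z. ennreal (p x z) * ennreal ((g x)^2) \<partial>M \<partial>M)"
    by (rule nn_integral_commute) measurable
  also have "\<dots> = (\<integral>\<^sup>+x. (\<integral>\<^sup>+z. ennreal (p x z) \<partial>M) * ennreal ((g x)^2) \<partial>M)"
    by (intro nn_integral_cong nn_integral_multc) measurable
  finally show ?thesis by (simp add: kernel_mass)
qed

lemma integrable_kernel_mult_square:
  assumes [measurable]: "g \<in> borel_measurable M" and "(\<integral>\<^sup>+x. ennreal ((g x)^2) \<partial>M) < \<infinity>"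
  shows "integrable M (\<lambda>x. p z x * (g x)^2)"
proof -
  obtain C where C: "AE y in M. \<bar>p z y\<bar> \<le> C" using kernel_ess_bounded by blast
  have "integrable M (\<lambda>x. (g x)^2)" by (rule integrableI_nonneg) (use assms in auto)
  then have int_C: "integrable M (\<lambda>x. C * (g x)^2)" by simp
  have bound: "AE x in M. norm (p z x * (g x)^2) \<le> norm (C * (g x)^2)"
    using C
  proof eventually_elim
    case (elim x)
    have "\<bar>p z x\<bar> * (g x)^2 \<le> \<bar>C\<bar> * (g x)^2" using elim by (intro mult_right_mono) auto
    then show ?case by (simp add: abs_mult)
  qed
  show ?thesis by (rule Bochner_Integration.integrable_bound[OF int_C _ bound]) measurable
qed

lemma integrable_kernel_mult:
  assumes [measurable]: "g \<in> borel_measurable M" and "(\<integral>\<^sup>+x. ennreal ((g x)^2) \<partial>M) < \<infinity>"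
  shows "integrable M (\<lambda>x. g x * p z x)"
proof (rule Bochner_Integration.integrable_bound)
  show "integrable M (\<lambda>x. p z x + p z x * (g x)^2)"
    using integrable_kernel integrable_kernel_mult_square[OF assms] by simp
  show "AE x in M. norm (g x * p z x) \<le> norm (p z x + p z x * (g x)^2)"
  proof (rule AE_I2)
    fix x
    have "\<bar>g x\<bar> \<le> 1 + (g x)^2"
    proof (cases "\<bar>g x\<bar> \<le> 1")
      case False
      then have "\<bar>g x\<bar> * 1 \<le> \<bar>g x\<bar> * \<bar>g x\<bar>" by (intro mult_left_mono) auto
      then show ?thesis by (simp add: power2_eq_square abs_mult[symmetric])
    qed (simp add: add_increasing2)
    then have "p z x * \<bar>g x\<bar> \<le> p z x * (1 + (g x)^2)" by (intro mult_left_mono) (auto simp: kernel_nonneg)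
    then show "norm (g x * p z x) \<le> norm (p z x + p z x * (g x)^2)"
      using kernel_nonneg[of z x] by (simp add: abs_mult distrib_left mult.commute)
  qed
qed measurable

lemma kernel_variance:
  assumes [measurable]: "g \<in> borel_measurable M" and "(\<integral>\<^sup>+x. ennreal ((g x)^2) \<partial>M) < \<infinity>"
  shows "(\<integral>\<^sup>+x. ennreal (p z x) * ennreal ((g x - markov_op M p g z)^2) \<partial>M) + ennreal ((markov_op M p g z)^2)
       = (\<integral>\<^sup>+x. ennreal (p z x) * ennreal ((g x)^2) \<partial>M)"
proof -
  let ?m = "markov_op M p g z"
  note integrable = integrable_kernel[of z] integrable_kernel_mult[OF assms, of z]
    integrable_kernel_mult_square[OF assms, of z]
  have nn_eq: "(\<integral>\<^sup>+x. ennreal (p z x) * ennreal (f x) \<partial>M) = ennreal (\<integral>x. p z x * f x \<partial>M)"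
    if "integrable M (\<lambda>x. p z x * f x)" "\<And>x. 0 \<le> f x" for f
    using nn_integral_eq_integral[OF that(1)] that(2) kernel_nonneg by (simp add: ennreal_mult)
  have expand: "p z x * (g x - ?m)^2 = p z x * (g x)^2 - 2 * ?m * (g x * p z x) + ?m^2 * p z x" for x
    by (simp add: power2_eq_square algebra_simps)
  have int_dev: "integrable M (\<lambda>x. p z x * (g x - ?m)^2)"
    unfolding expand using integrable by simp
  have "(\<integral>x. p z x * (g x - ?m)^2 \<partial>M) = (\<integral>x. p z x * (g x)^2 \<partial>M) - 2 * ?m * ?m + ?m^2"
    unfolding expand using integrable by (simp add: integral_kernel markov_op_def[symmetric])
  then have var: "(\<integral>x. p z x * (g x - ?m)^2 \<partial>M) + ?m^2 = (\<integral>x. p z x * (g x)^2 \<partial>M)"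
    by (simp add: power2_eq_square)
  have "0 \<le> (\<integral>x. p z x * (g x - ?m)^2 \<partial>M)"
    by (intro integral_nonneg_AE) (simp add: kernel_nonneg)
  moreover have "(\<integral>\<^sup>+x. ennreal (p z x) * ennreal ((g x - ?m)^2) \<partial>M) = ennreal (\<integral>x. p z x * (g x - ?m)^2 \<partial>M)"
    by (rule nn_eq[OF int_dev]) simp
  moreover have "(\<integral>\<^sup>+x. ennreal (p z x) * ennreal ((g x)^2) \<partial>M) = ennreal (\<integral>x. p z x * (g x)^2 \<partial>M)"
    by (rule nn_eq[OF integrable(3)]) simp
  ultimately show ?thesis
    unfolding var[symmetric] by (simp add: ennreal_plus)
qed

lemma conditional_variance_add_norm:
  assumes [measurable]: "g \<in> borel_measurable M" and "(\<integral>\<^sup>+x. ennreal ((g x)^2) \<partial>M) < \<infinity>"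
  shows "conditional_variance M p g + (\<integral>\<^sup>+z. ennreal ((markov_op M p g z)^2) \<partial>M)
       = (\<integral>\<^sup>+x. ennreal ((g x)^2) \<partial>M)"
proof -
  have "conditional_variance M p g + (\<integral>\<^sup>+z. ennreal ((markov_op M p g z)^2) \<partial>M)
      = (\<integral>\<^sup>+z. (\<integral>\<^sup>+x. ennreal (p z x) * ennreal ((g x - markov_op M p g z)^2) \<partial>M)
                + ennreal ((markov_op M p g z)^2) \<partial>M)"
    unfolding conditional_variance_def by (rule nn_integral_add[symmetric]) measurable
  also have "\<dots> = (\<integral>\<^sup>+z. \<integral>\<^sup>+x. ennreal (p z x) * ennreal ((g x)^2) \<partial>M \<partial>M)"
    by (intro nn_integral_cong kernel_variance[OF assms])
  finally show ?thesis by (simp add: nn_integral_kernel_square)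
qed

lemma kernel_energy_le_two_step_energy:
  assumes [measurable]: "g \<in> borel_measurable M" and "0 < \<alpha>"
    and dominated: "AE w in M \<Otimes>\<^sub>M M. \<alpha> * p (fst w) (snd w) \<le> (\<integral>z. p (fst w) z * p (snd w) z \<partial>M)"
  shows "kernel_energy M p g \<le> ennreal (1/\<alpha>) * two_step_energy M p g"
proof -
  have "kernel_energy M p g
      = (\<integral>\<^sup>+w. ennreal (p (fst w) (snd w)) * ennreal ((g (snd w) - g (fst w))^2) \<partial>(M \<Otimes>\<^sub>M M))"
    unfolding kernel_energy_def by (rule nn_integral_iterated) measurable
  also have "\<dots> \<le> (\<integral>\<^sup>+w. ennreal (1/\<alpha>) * (\<integral>\<^sup>+z. ennreal (p (fst w) z) * ennreal (p (snd w) z)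
                       * ennreal ((g (snd w) - g (fst w))^2) \<partial>M) \<partial>(M \<Otimes>\<^sub>M M))"
  proof (rule nn_integral_mono_AE)
    show "AE w in M \<Otimes>\<^sub>M M. ennreal (p (fst w) (snd w)) * ennreal ((g (snd w) - g (fst w))^2)
       \<le> ennreal (1/\<alpha>) * (\<integral>\<^sup>+z. ennreal (p (fst w) z) * ennreal (p (snd w) z) * ennreal ((g (snd w) - g (fst w))^2) \<partial>M)"
      using dominated
    proof eventually_elim
      case (elim w)
      obtain a b where w: "w = (a, b)" by fastforce
      have "ennreal (p a b) \<le> ennreal (1/\<alpha> * (\<integral>z. p a z * p b z \<partial>M))"
        using elim \<open>0 < \<alpha>\<close> by (intro ennreal_leI) (simp add: w field_simps)
      also have "\<dots> = ennreal (1/\<alpha>) * ennreal (\<integral>z. p a z * p b z \<partial>M)"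
        using \<open>0 < \<alpha>\<close> by (intro ennreal_mult integral_nonneg_AE) (simp_all add: kernel_nonneg)
      also have "\<dots> \<le> ennreal (1/\<alpha>) * (\<integral>\<^sup>+z. ennreal (p a z) * ennreal (p b z) \<partial>M)"
        using ennreal_integral_le_nn_integral[of "\<lambda>z. p a z * p b z" M]
        by (intro mult_left_mono) (simp_all add: ennreal_mult kernel_nonneg)
      finally have "ennreal (p a b) * ennreal ((g b - g a)^2)
          \<le> ennreal (1/\<alpha>) * (\<integral>\<^sup>+z. ennreal (p a z) * ennreal (p b z) \<partial>M) * ennreal ((g b - g a)^2)"
        by (rule mult_right_mono) simp
      also have "\<dots> = ennreal (1/\<alpha>) * (\<integral>\<^sup>+z. ennreal (p a z) * ennreal (p b z) * ennreal ((g b - g a)^2) \<partial>M)"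
        using nn_integral_multc[of "\<lambda>z. ennreal (p a z) * ennreal (p b z)" M] by (simp add: mult.assoc)
      finally show ?case by (simp add: w)
    qed
  qed
  also have "\<dots> = ennreal (1/\<alpha>) * two_step_energy M p g"
    unfolding two_step_energy_def
    by (subst nn_integral_cmult, measurable, subst nn_integral_iterated, measurable)
  finally show ?thesis .
qed

lemma two_step_energy_le_split:
  assumes [measurable]: "g \<in> borel_measurable M" "m \<in> borel_measurable M"
  shows "two_step_energy M p g
    \<le> 2 * (\<integral>\<^sup>+x. \<integral>\<^sup>+y. \<integral>\<^sup>+z. ennreal (p x z) * ennreal (p y z) * ennreal ((g x - m z)^2) \<partial>M \<partial>M \<partial>M)
     + 2 * (\<integral>\<^sup>+x. \<integral>\<^sup>+y. \<integral>\<^sup>+z. ennreal (p x z) * ennreal (p y z) * ennreal ((g y - m z)^2) \<partial>M \<partial>M \<partial>M)"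
proof -
  let ?T = "(M \<Otimes>\<^sub>M M) \<Otimes>\<^sub>M M"
  define K where "K x y z = ennreal (p x z) * ennreal (p y z)" for x y z
  have [measurable]: "(\<lambda>u. K (fst (fst u)) (snd (fst u)) (snd u)) \<in> borel_measurable ?T"
    unfolding K_def by measurable
  have "two_step_energy M p g
     \<le> (\<integral>\<^sup>+x. \<integral>\<^sup>+y. \<integral>\<^sup>+z. 2 * (K x y z * ennreal ((g x - m z)^2)) + 2 * (K x y z * ennreal ((g y - m z)^2)) \<partial>M \<partial>M \<partial>M)"
    unfolding two_step_energy_def K_def[symmetric]
  proof (intro nn_integral_mono)
    fix x y z
    have "ennreal ((g y - g x)^2) \<le> ennreal (2 * (g x - m z)^2 + 2 * (g y - m z)^2)"
      using power2_diff_le_sum[of "g y" "g x" "m z"] by (rule ennreal_leI)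
    also have "\<dots> = 2 * ennreal ((g x - m z)^2) + 2 * ennreal ((g y - m z)^2)"
      by (simp add: ennreal_plus ennreal_mult)
    finally have "K x y z * ennreal ((g y - g x)^2)
        \<le> K x y z * (2 * ennreal ((g x - m z)^2) + 2 * ennreal ((g y - m z)^2))"
      by (rule mult_left_mono) simp
    then show "K x y z * ennreal ((g y - g x)^2)
        \<le> 2 * (K x y z * ennreal ((g x - m z)^2)) + 2 * (K x y z * ennreal ((g y - m z)^2))"
      by (simp add: distrib_left mult_ac)
  qed
  also have "\<dots> = 2 * (\<integral>\<^sup>+x. \<integral>\<^sup>+y. \<integral>\<^sup>+z. K x y z * ennreal ((g x - m z)^2) \<partial>M \<partial>M \<partial>M)
                + 2 * (\<integral>\<^sup>+x. \<integral>\<^sup>+y. \<integral>\<^sup>+z. K x y z * ennreal ((g y - m z)^2) \<partial>M \<partial>M \<partial>M)"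
    by (simp add: nn_integral_iterated3 nn_integral_add nn_integral_cmult)
  finally show ?thesis unfolding K_def .
qed

lemma two_step_centered_eq_conditional:
  assumes [measurable]: "g \<in> borel_measurable M" "m \<in> borel_measurable M"
  shows "(\<integral>\<^sup>+x. \<integral>\<^sup>+y. \<integral>\<^sup>+z. ennreal (p x z) * ennreal (p y z) * ennreal ((g x - m z)^2) \<partial>M \<partial>M \<partial>M)
       = (\<integral>\<^sup>+z. \<integral>\<^sup>+x. ennreal (p z x) * ennreal ((g x - m z)^2) \<partial>M \<partial>M)"
proof -
  define W where "W z = (\<integral>\<^sup>+x. ennreal (p x z) * ennreal ((g x - m z)^2) \<partial>M)" for z
  have [measurable]: "W \<in> borel_measurable M" unfolding W_def by measurable
  have "(\<integral>\<^sup>+x. \<integral>\<^sup>+y. \<integral>\<^sup>+z. ennreal (p x z) * ennreal (p y z) * ennreal ((g x - m z)^2) \<partial>M \<partial>M \<partial>M)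
      = (\<integral>\<^sup>+x. \<integral>\<^sup>+z. \<integral>\<^sup>+y. ennreal (p x z) * ennreal (p y z) * ennreal ((g x - m z)^2) \<partial>M \<partial>M \<partial>M)"
    by (intro nn_integral_cong nn_integral_commute) measurable
  also have "\<dots> = (\<integral>\<^sup>+z. \<integral>\<^sup>+x. \<integral>\<^sup>+y. ennreal (p y z) * (ennreal (p x z) * ennreal ((g x - m z)^2)) \<partial>M \<partial>M \<partial>M)"
    by (subst nn_integral_commute) (measurable, simp add: mult_ac)
  also have "\<dots> = (\<integral>\<^sup>+z. (\<integral>\<^sup>+y. ennreal (p y z) \<partial>M) * W z \<partial>M)"
    unfolding W_def by (simp add: nn_integral_multc nn_integral_cmult)
  also have "\<dots> = (\<integral>\<^sup>+z. \<integral>\<^sup>+y. ennreal (p y z) * W z \<partial>M \<partial>M)"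
    by (intro nn_integral_cong nn_integral_multc[symmetric]) measurable
  \<comment> \<open>By symmetry, the column integrals \<open>\<integral> p(y, z) dy\<close> may be replaced by the row masses \<open>1\<close>.\<close>
  also have "\<dots> = (\<integral>\<^sup>+z. \<integral>\<^sup>+y. ennreal (p z y) * W z \<partial>M \<partial>M)"
    by (rule nn_integral_kernel_swap[symmetric]) measurable
  also have "\<dots> = (\<integral>\<^sup>+z. W z \<partial>M)"
    by (intro nn_integral_cong) (simp add: nn_integral_multc kernel_mass)
  also have "\<dots> = (\<integral>\<^sup>+z. \<integral>\<^sup>+x. ennreal (p z x) * ennreal ((g x - m z)^2) \<partial>M \<partial>M)"
    unfolding W_def by (rule nn_integral_kernel_swap[symmetric]) measurable
  finally show ?thesis .
qed

lemma two_step_energy_le_conditional_variance: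
  assumes [measurable]: "g \<in> borel_measurable M"
  shows "two_step_energy M p g \<le> 4 * conditional_variance M p g"
proof -
  let ?m = "markov_op M p g"
  have "(\<integral>\<^sup>+x. \<integral>\<^sup>+y. \<integral>\<^sup>+z. ennreal (p x z) * ennreal (p y z) * ennreal ((g y - ?m z)^2) \<partial>M \<partial>M \<partial>M)
      = (\<integral>\<^sup>+x. \<integral>\<^sup>+y. \<integral>\<^sup>+z. ennreal (p x z) * ennreal (p y z) * ennreal ((g x - ?m z)^2) \<partial>M \<partial>M \<partial>M)"
    by (subst nn_integral_commute) (measurable, simp add: mult_ac)
  then show ?thesis
    using two_step_energy_le_split[of g ?m]
    unfolding conditional_variance_def two_step_centered_eq_conditional[OF assms markov_op_measurable[OF assms], symmetric]
    by (simp add: distrib_right[symmetric] del: distrib_right)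
qed

end

locale markov_poincare_space =
  fixes M :: "'a::metric_space measure"
    and p :: "'a \<Rightarrow> 'a \<Rightarrow> real"
    and b h h' :: real
  assumes mms: "metric_measure_space M"
    and b_pos: "0 < b"
    and quasi_geodesic: "quasi_b_geodesic b TYPE('a)"
    and local_doubling: "VD_loc M" and doubling_at_infinity: "VD_infty M"
    and poincare: "poincare_h M h"
    and markov: "markov_kernel M p"
    and compat: "compatible M p h h'"
    and b_less_h: "h > b"
begin

lemma sets_M[measurable_cong]: "sets M = sets borel"
  using mms unfolding metric_measure_space_def radon_full_support_def by auto

lemma space_M[simp]: "space M = UNIV"
  using sets_eq_imp_space_eq[OF sets_M] by simp

lemma cball_in_sets[measurable]: "cball x r \<in> sets M"
  by (simp add: sets_M)

lemma h_pos: "0 < h" and h'_pos: "0 < h'" and h_le_h': "h \<le> h'"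
  using b_pos b_less_h compat unfolding compatible_def by auto

lemma measure_cball_h'_pos: "0 < measure M (cball x h')"
  \<comment> \<open>Otherwise the upper kernel bound \<open>C1 / 0 = 0\<close> would force \<open>p x = 0\<close> almost everywhere.\<close>
proof (rule ccontr)
  assume "\<not> 0 < measure M (cball x h')"
  then have zero: "measure M (cball x h') = 0" using measure_nonneg[of M] by (meson not_less order_antisym)
  obtain c1 C1 where "\<forall>x. AE y in M. c1 / measure M (cball x h) * indicator (cball x h) y \<le> p x y \<and>
      p x y \<le> C1 / measure M (cball x h') * indicator (cball x h') y"
    using compat unfolding compatible_def by blast
  then have "AE y in M. p x y \<le> 0"
    by (rule allE[of _ x]) (auto elim!: eventually_mono simp: zero)
  then have "AE y in M. ennreal (p x y) = 0"
    by eventually_elim (simp add: ennreal_eq_0_iff)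
  then have "(\<integral>\<^sup>+y. ennreal (p x y) \<partial>M) = 0" by (simp add: nn_integral_cong_AE)
  then show False using markov by (simp add: markov_kernel_def)
qed

lemma emeasure_cball_finite: "emeasure M (cball x r) < \<infinity>"
proof -
  \<comment> \<open>\<open>measure\<close> vanishes on sets of infinite measure, so \<open>measure_cball_h'_pos\<close> gives finiteness at
    radius \<open>h'\<close>; \<open>(VD)\<^sub>l\<^sub>o\<^sub>c\<close> propagates it to all radii.\<close>
  have "emeasure M (cball x (2^k * h')) < \<infinity>" for k :: nat
  proof (induction k)
    case 0
    then show ?case
      using measure_cball_h'_pos[of x] unfolding measure_def
      by (cases "emeasure M (cball x h') = \<infinity>") (auto simp: less_top)
  next
    case (Suc k)
    obtain C where "\<forall>x. V M x (2 * (2^k * h')) \<le> ennreal C * V M x (2^k * h')"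
      using local_doubling h'_pos unfolding VD_loc_def by (metis zero_less_power zero_less_numeral mult_pos_pos)
    then have "emeasure M (cball x (2^Suc k * h')) \<le> ennreal C * emeasure M (cball x (2^k * h'))"
      unfolding V_def by (simp add: mult.assoc)
    also have "\<dots> < \<infinity>" using Suc by (simp add: ennreal_mult_less_top)
    finally show ?case .
  qed
  moreover obtain k :: nat where "r / h' < 2^k" using real_arch_pow[of 2 "r/h'"] by auto
  then have "emeasure M (cball x r) \<le> emeasure M (cball x (2^k * h'))"
    using h'_pos by (intro emeasure_mono) (auto simp: divide_less_eq)
  ultimately show ?thesis by (meson le_less_trans)
qed

lemma fmeasurable_cball[simp]: "cball x r \<in> fmeasurable M"
  using emeasure_cball_finite by (auto simp: fmeasurable_def)

lemma emeasure_cball: "emeasure M (cball x r) = ennreal (measure M (cball x r))"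
  using emeasure_cball_finite[of x r] by (simp add: emeasure_eq_ennreal_measure less_top)

lemma measure_cball_pos: "0 < r \<Longrightarrow> 0 < measure M (cball x r)"
proof -
  assume "0 < r"
  then have "0 < emeasure M (ball x r)"
    using mms unfolding metric_measure_space_def radon_full_support_def by auto
  also have "\<dots> \<le> emeasure M (cball x r)" by (intro emeasure_mono) (auto simp: sets_M)
  finally show ?thesis by (simp add: emeasure_cball)
qed

sublocale symmetric_markov_kernel M p
proof unfold_locales
  have "(\<Union>k::nat. cball undefined (real k)) = (UNIV :: 'a set)"
    by (auto, meson real_nat_ceiling_ge)
  then show "\<exists>A. countable A \<and> A \<subseteq> sets M \<and> \<Union> A = space M \<and> (\<forall>a\<in>A. emeasure M a \<noteq> \<infinity>)"
    using emeasure_cball_finite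
    by (intro exI[of _ "range (\<lambda>k::nat. cball undefined (real k))"]) (auto simp: less_top)
  show "AE z in M \<Otimes>\<^sub>M M. p (fst z) (snd z) = p (snd z) (fst z)"
    using compat unfolding compatible_def by blast
qed (use markov in \<open>auto simp: markov_kernel_def\<close>)

section \<open>Reverse volume doubling\<close>

lemma doubling_at_infinity_measure:
  obtains r0 C where "0 < r0" "0 < C"
    "\<And>x r. r0 \<le> r \<Longrightarrow> measure M (cball x (2*r)) \<le> C * measure M (cball x r)"
proof -
  obtain r0 C where "0 < r0" "0 < C" and "\<forall>x. \<forall>r\<ge>r0. V M x (2*r) \<le> ennreal C * V M x r"
    using doubling_at_infinity unfolding VD_infty_def by blast
  then show thesis
    by (intro that[of r0 C]) (auto simp: V_def emeasure_cball ennreal_mult[symmetric] ennreal_le_iff)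
qed

lemma measure_cball_growth_step:
  assumes "0 < r0" "0 < C"
    and dbl: "\<And>x r. r0 \<le> r \<Longrightarrow> measure M (cball x (2*r)) \<le> C * measure M (cball x r)"
    and "2*r0 \<le> s" "h' \<le> s" "2 * s \<le> dist x z"
  shows "(1 + 1/C^3) * measure M (cball x s) \<le> measure M (cball x (4 * s))"
proof -
  \<comment> \<open>A point \<open>y\<close> at distance about \<open>2s\<close> from \<open>x\<close>: \<open>B(y, s / 2)\<close> lies in \<open>B(x,4s) - B(x,s)\<close>, yet \<open>B(x,s) \<subseteq> B(y,4s)\<close>.\<close>
  have "b < s" using b_less_h h_le_h' assms by simp
  obtain y where y: "2 * s \<le> dist x y" "dist x y \<le> 2 * s + b"
    using quasi_b_geodesic_point_at_distance[OF quasi_geodesic, of "2 * s" x z] b_pos assms by auto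
  have disj: "cball y (s / 2) \<inter> cball x s = {}"
  proof (rule ccontr)
    assume "cball y (s / 2) \<inter> cball x s \<noteq> {}"
    then obtain w where "dist y w \<le> s / 2" "dist x w \<le> s" by auto
    then show False using y \<open>b < s\<close> dist_triangle[of x y w] by (simp add: dist_commute)
  qed
  have sub: "cball y (s / 2) \<union> cball x s \<subseteq> cball x (4 * s)"
  proof
    fix w assume "w \<in> cball y (s / 2) \<union> cball x s"
    then show "w \<in> cball x (4 * s)"
    proof
      assume "w \<in> cball y (s / 2)"
      then have "dist x w \<le> dist x y + s / 2" using dist_triangle[of x w y] by simp
      then show ?thesis using y \<open>b < s\<close> by simp
    qed (use \<open>b < s\<close> b_pos in auto)
  qed
  have sub2: "cball x s \<subseteq> cball y (4 * s)"
  proof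
    fix w assume "w \<in> cball x s"
    then have "dist y w \<le> dist x y + s" using dist_triangle[of y w x] by (simp add: dist_commute)
    then show "w \<in> cball y (4 * s)" using y \<open>b < s\<close> by simp
  qed
  have "measure M (cball x s) \<le> measure M (cball y (2 * (2 * s)))"
    using sub2 by (intro measure_mono_fmeasurable) auto
  also have "\<dots> \<le> C * measure M (cball y (2 * s))"
    using dbl[of "2 * s" y] assms by simp
  also have "\<dots> \<le> C * (C * measure M (cball y s))"
    using dbl[of s y] assms by simp
  also have "\<dots> \<le> C * (C * (C * measure M (cball y (s / 2))))"
    using dbl[of "s / 2" y] assms by simp
  finally have A: "measure M (cball x s) / C^3 \<le> measure M (cball y (s / 2))"
    using \<open>0 < C\<close> by (simp add: divide_le_eq power3_eq_cube mult_ac)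
  have "measure M (cball y (s / 2)) + measure M (cball x s) = measure M (cball y (s / 2) \<union> cball x s)"
    using disj by (intro measure_Union[symmetric]) (auto simp: emeasure_cball)
  also have "\<dots> \<le> measure M (cball x (4 * s))"
    using sub by (intro measure_mono_fmeasurable) auto
  finally show ?thesis using A by (simp add: algebra_simps)
qed

lemma measure_cball_growth:
  assumes "0 < r0" "0 < C"
    and dbl: "\<And>x r. r0 \<le> r \<Longrightarrow> measure M (cball x (2*r)) \<le> C * measure M (cball x r)"
    and "2*r0 \<le> S" "h' \<le> S" and far: "\<forall>j<k. \<exists>z. 2 * (4^j * S) \<le> dist x z"
  shows "(1 + 1/C^3)^k * measure M (cball x S) \<le> measure M (cball x (4^k * S))"
  using far
proof (induction k)
  case (Suc k)
  have "S \<le> 4^k * S" using assms by (simp add: mult_le_cancel_right1)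
  obtain z where z: "2 * (4^k * S) \<le> dist x z" using Suc.prems by auto
  have "(1 + 1/C^3) * measure M (cball x (4^k * S)) \<le> measure M (cball x (4 * (4^k * S)))"
  proof (rule measure_cball_growth_step[OF \<open>0 < r0\<close> \<open>0 < C\<close> dbl _ _ z])
    show "2 * r0 \<le> 4^k * S" "h' \<le> 4^k * S"
      using assms \<open>S \<le> 4^k * S\<close> by linarith+
  qed
  moreover have "(1 + 1/C^3)^k * measure M (cball x S) \<le> measure M (cball x (4^k * S))"
    using Suc by auto
  ultimately show ?case
    using \<open>0 < C\<close> by (auto simp: mult.assoc intro: order_trans[OF mult_left_mono])
qed simp

lemma reverse_volume_doubling:
  obtains R0 K \<epsilon> where "0 < R0" "1 \<le> K" "0 < \<epsilon>"
    "\<And>x S. R0 \<le> S \<Longrightarrow> ereal S \<le> ereal \<epsilon> * diamM TYPE('a) \<Longrightarrow>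
       2 * measure M (cball x S) \<le> measure M (cball x (K * S))"
proof -
  obtain r0 C where r0: "0 < r0" "0 < C"
    and dbl: "\<And>x r. r0 \<le> r \<Longrightarrow> measure M (cball x (2*r)) \<le> C * measure M (cball x r)"
    by (rule doubling_at_infinity_measure) blast
  have "1 < 1 + 1/C^3" using r0 by simp
  then obtain k :: nat where k: "2 < (1 + 1/C^3)^k" using real_arch_pow by blast
  define K :: real where "K = 4^k"
  have "1 \<le> K" by (simp add: K_def)
  \<comment> \<open>The smallness \<open>S \<le> \<epsilon> diam M\<close> guarantees points at distance \<open>2 \<cdot> 4\<^sup>j S\<close> from any \<open>x\<close> for all \<open>j < k\<close>.\<close>
  have "2 * measure M (cball x S) \<le> measure M (cball x (K * S))"
    if S: "max (2*r0) h' \<le> S" and small: "ereal S \<le> ereal (1 / (5*K)) * diamM TYPE('a)" for x S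
  proof -
    have "0 < S" using S r0 by simp
    have "\<exists>u v::'a. 4 * K * S < dist u v"
    proof (rule ccontr)
      assume "\<not> ?thesis"
      then have "\<forall>u v::'a. dist u v \<le> 4 * K * S" by (simp add: not_less)
      then have "diamM TYPE('a) \<le> ereal (4 * K * S)" unfolding diamM_def by (auto intro!: SUP_least)
      then have "ereal (1 / (5*K)) * diamM TYPE('a) \<le> ereal (4/5 * S)"
        using ereal_mult_left_mono[of "diamM TYPE('a)" "ereal (4 * K * S)" "ereal (1 / (5*K))"] \<open>1 \<le> K\<close>
        by simp
      with small have "ereal S \<le> ereal (4/5 * S)" by (rule order_trans)
      then show False using \<open>0 < S\<close> by simp
    qed
    then obtain u v :: 'a where uv: "4 * K * S < dist u v" by blast
    have "\<forall>j<k. \<exists>z. 2 * (4^j * S) \<le> dist x z"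
    proof (intro allI impI)
      fix j assume "j < k"
      then have "4 * (4^j * S) \<le> 4 * K * S" using \<open>0 < S\<close> by (simp add: K_def power_increasing)
      then have "4 * (4^j * S) < dist x u + dist x v"
        using uv dist_triangle[of u v x] by (simp add: dist_commute)
      then have "2 * (4^j * S) \<le> dist x u \<or> 2 * (4^j * S) \<le> dist x v" by arith
      then show "\<exists>z. 2 * (4^j * S) \<le> dist x z" by blast
    qed
    then have "(1 + 1/C^3)^k * measure M (cball x S) \<le> measure M (cball x (K * S))"
      unfolding K_def using S by (intro measure_cball_growth[OF r0 dbl]) auto
    moreover have "2 * measure M (cball x S) \<le> (1 + 1/C^3)^k * measure M (cball x S)"
      using k by (intro mult_right_mono) auto
    ultimately show ?thesis by simp
  qed
  then show thesis
    using r0 h'_pos \<open>1 \<le> K\<close> by (intro that[of "max (2*r0) h'" K "1 / (5*K)"]) auto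
qed

lemma doubling_radius:
  assumes "0 < r1"
  obtains \<epsilon>0 L where "0 < \<epsilon>0" "1 \<le> L"
    "\<And>x r. h' \<le> r \<Longrightarrow> ereal r \<le> ereal \<epsilon>0 * diamM TYPE('a) \<Longrightarrow>
       \<exists>R. r \<le> R \<and> r1 \<le> R \<and> R \<le> L * r \<and> 2 * measure M (cball x r) \<le> measure M (cball x R)"
proof -
  obtain R0 K \<epsilon> where "0 < R0" "1 \<le> K" "0 < \<epsilon>"
    and rev_dbl: "\<And>x S. R0 \<le> S \<Longrightarrow> ereal S \<le> ereal \<epsilon> * diamM TYPE('a) \<Longrightarrow>
       2 * measure M (cball x S) \<le> measure M (cball x (K * S))"
    by (rule reverse_volume_doubling) blast
  \<comment> \<open>Radii \<open>r \<ge> h'\<close> are enlarged to \<open>S = max r (max R0 r1) \<le> A r\<close>, where reverse doubling applies.\<close>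
  define A where "A = 1 + R0/h' + r1/h'"
  have "1 \<le> A" using \<open>0 < R0\<close> \<open>0 < r1\<close> h'_pos by (simp add: A_def)
  have "\<exists>R. r \<le> R \<and> r1 \<le> R \<and> R \<le> K * A * r \<and> 2 * measure M (cball x r) \<le> measure M (cball x R)"
    if r: "h' \<le> r" and small: "ereal r \<le> ereal (\<epsilon> / A) * diamM TYPE('a)" for x r
  proof (intro exI conjI)
    define S where "S = max r (max R0 r1)"
    have "R0 \<le> R0 * (r/h')" "r1 \<le> r1 * (r/h')"
      using \<open>0 < R0\<close> \<open>0 < r1\<close> r h'_pos by (simp_all add: le_divide_eq)
    then have "S \<le> A * r" using r h'_pos \<open>0 < R0\<close> \<open>0 < r1\<close> by (simp add: S_def A_def algebra_simps)
    then have "ereal S \<le> ereal A * ereal r" by simp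
    also have "\<dots> \<le> ereal A * (ereal (\<epsilon> / A) * diamM TYPE('a))"
      using \<open>1 \<le> A\<close> by (intro ereal_mult_left_mono[OF small]) simp
    also have "\<dots> = ereal \<epsilon> * diamM TYPE('a)"
      using \<open>1 \<le> A\<close> by (simp add: mult.assoc[symmetric])
    finally have "2 * measure M (cball x S) \<le> measure M (cball x (K * S))"
      by (intro rev_dbl) (auto simp: S_def)
    moreover have "measure M (cball x r) \<le> measure M (cball x S)"
      by (intro measure_mono_fmeasurable) (auto simp: S_def)
    ultimately show "2 * measure M (cball x r) \<le> measure M (cball x (K * S))" by simp
    have "S \<le> K * S" using \<open>1 \<le> K\<close> r h'_pos by (simp add: S_def mult_le_cancel_right1)
    then show "r \<le> K * S" "r1 \<le> K * S" by (auto simp: S_def)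
    show "K * S \<le> K * A * r" using \<open>S \<le> A * r\<close> \<open>1 \<le> K\<close> by (simp add: mult.assoc)
  qed
  then show thesis
    using \<open>0 < \<epsilon>\<close> \<open>1 \<le> A\<close> mult_mono[of 1 K 1 A] \<open>1 \<le> K\<close> by (intro that[of "\<epsilon> / A" "K * A"]) auto
qed

end

section \<open>Spectral gap on balls\<close>

locale markov_poincare_constants = markov_poincare_space +
  fixes c1 \<alpha> CP C2 rP :: real
  assumes c1_pos: "0 < c1"
    and kernel_lower_bound: "\<And>x. AE y in M. c1 / measure M (cball x h) * indicator (cball x h) y \<le> p x y"
    and \<alpha>_pos: "0 < \<alpha>"
    and kernel_dominated: "AE w in M \<Otimes>\<^sub>M M. \<alpha> * p (fst w) (snd w) \<le> p2 M p (fst w) (snd w)"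
    and CP_pos: "0 < CP" and rP_pos: "0 < rP"
    and poincare_ineq: "\<And>f x r. L_infty_loc M f \<Longrightarrow> rP \<le> r \<Longrightarrow>
       (\<integral>\<^sup>+y. indicator (cball x r) y * ennreal ((f y - ball_avg M f (cball x r))^2) \<partial>M)
         \<le> ennreal (CP * r^2) * (\<integral>\<^sup>+y. indicator (cball x (C2 * r)) y * grad_sq M h f y \<partial>M)"
begin

lemma grad_sq_le_kernel:
  assumes [measurable]: "g \<in> borel_measurable M"
  shows "grad_sq M h g x \<le> ennreal (1/c1) * (\<integral>\<^sup>+y. ennreal (p x y) * ennreal ((g y - g x)^2) \<partial>M)"
proof -
  let ?\<mu> = "measure M (cball x h)"
  have "0 < ?\<mu>" using measure_cball_pos h_pos by simp
  have "grad_sq M h g x = (\<integral>\<^sup>+y. indicator (cball x h) y * ennreal ((g y - g x)^2) \<partial>M) * ennreal (1 / ?\<mu>)"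
    using \<open>0 < ?\<mu>\<close> unfolding grad_sq_def V_def emeasure_cball
    by (simp add: divide_ennreal_def inverse_ennreal inverse_eq_divide)
  also have "\<dots> = (\<integral>\<^sup>+y. indicator (cball x h) y * ennreal ((g y - g x)^2) * ennreal (1 / ?\<mu>) \<partial>M)"
    by (rule nn_integral_multc[symmetric]) measurable
  also have "\<dots> \<le> (\<integral>\<^sup>+y. ennreal (1/c1) * (ennreal (p x y) * ennreal ((g y - g x)^2)) \<partial>M)"
    using kernel_lower_bound[of x]
  proof (intro nn_integral_mono_AE, eventually_elim)
    case (elim y)
    show ?case
    proof (cases "y \<in> cball x h")
      case True
      then have "1 / ?\<mu> \<le> 1/c1 * p x y"
        using elim c1_pos \<open>0 < ?\<mu>\<close> by (simp add: field_simps)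
      then have "(g y - g x)^2 * (1 / ?\<mu>) \<le> (g y - g x)^2 * (1/c1 * p x y)"
        by (rule mult_left_mono) simp
      then have "(g y - g x)^2 * (1 / ?\<mu>) \<le> 1/c1 * (p x y * (g y - g x)^2)"
        by (simp add: mult_ac)
      then show ?thesis
        using True c1_pos kernel_nonneg[of x y] \<open>0 < ?\<mu>\<close>
        by (simp add: ennreal_mult[symmetric] ennreal_leI)
    qed simp
  qed
  also have "\<dots> = ennreal (1/c1) * (\<integral>\<^sup>+y. ennreal (p x y) * ennreal ((g y - g x)^2) \<partial>M)"
    by (rule nn_integral_cmult) measurable
  finally show ?thesis .
qed

lemma nn_integral_square_le_grad_sq:
  assumes [measurable]: "g \<in> borel_measurable M"
    and "\<And>y. y \<notin> cball x r \<Longrightarrow> g y = 0"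
    and "cball x r \<subseteq> cball x R" "2 * measure M (cball x r) \<le> measure M (cball x R)" "rP \<le> R"
  shows "(\<integral>\<^sup>+y. ennreal ((g y)^2) \<partial>M) \<le> ennreal (2 * CP * R^2) * (\<integral>\<^sup>+y. grad_sq M h g y \<partial>M)"
proof -
  \<comment> \<open>The Poincar\'e inequality is only available for locally bounded functions, hence the truncation.\<close>
  have "(\<integral>\<^sup>+y. ennreal ((clip n (g y))^2) \<partial>M) \<le> ennreal (2 * CP * R^2) * (\<integral>\<^sup>+y. grad_sq M h g y \<partial>M)"
    for n :: nat
  proof -
    define f where "f y = clip n (g y)" for y
    have [measurable]: "f \<in> borel_measurable M" unfolding f_def clip_def by measurable
    have "L_infty_loc M f"
      unfolding L_infty_loc_def by (auto simp: f_def abs_clip intro!: exI[of _ "real n"])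
    have "(\<integral>\<^sup>+y. ennreal ((f y)^2) \<partial>M)
        \<le> 2 * (\<integral>\<^sup>+y. indicator (cball x R) y * ennreal ((f y - ball_avg M f (cball x R))^2) \<partial>M)"
      by (intro nn_integral_square_le_deviation)
         (use assms emeasure_cball_finite[of x R] in \<open>auto simp: f_def clip_def\<close>)
    also have "\<dots> \<le> 2 * (ennreal (CP * R^2) * (\<integral>\<^sup>+y. indicator (cball x (C2 * R)) y * grad_sq M h f y \<partial>M))"
      by (intro mult_left_mono poincare_ineq \<open>L_infty_loc M f\<close> \<open>rP \<le> R\<close>) simp
    also have "(\<integral>\<^sup>+y. indicator (cball x (C2 * R)) y * grad_sq M h f y \<partial>M) \<le> (\<integral>\<^sup>+y. grad_sq M h g y \<partial>M)"
      using grad_sq_mono[of f _ g M h] abs_clip_diff_le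
      by (intro nn_integral_mono) (auto simp: f_def indicator_def)
    finally show ?thesis
      using CP_pos by (simp add: f_def ennreal_mult mult_left_mono mult.assoc)
  qed
  then show ?thesis by (simp add: nn_integral_square_eq_SUP_clip[of g] SUP_least)
qed

lemma nn_integral_square_le_conditional_variance:
  assumes [measurable]: "g \<in> borel_measurable M"
    and "\<And>y. y \<notin> cball x r \<Longrightarrow> g y = 0"
    and "cball x r \<subseteq> cball x R" "2 * measure M (cball x r) \<le> measure M (cball x R)" "rP \<le> R"
  shows "(\<integral>\<^sup>+y. ennreal ((g y)^2) \<partial>M) \<le> ennreal (8 * CP * R^2 / (c1 * \<alpha>)) * conditional_variance M p g"
proof -
  have "(\<integral>\<^sup>+y. grad_sq M h g y \<partial>M) \<le> (\<integral>\<^sup>+x. ennreal (1/c1) * (\<integral>\<^sup>+y. ennreal (p x y) * ennreal ((g y - g x)^2) \<partial>M) \<partial>M)"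
    by (intro nn_integral_mono grad_sq_le_kernel) measurable
  also have "\<dots> = ennreal (1/c1) * kernel_energy M p g"
    unfolding kernel_energy_def by (rule nn_integral_cmult) measurable
  finally have grad: "(\<integral>\<^sup>+y. grad_sq M h g y \<partial>M) \<le> ennreal (1/c1) * kernel_energy M p g" .
  have "(\<integral>\<^sup>+y. ennreal ((g y)^2) \<partial>M) \<le> ennreal (2 * CP * R^2) * (\<integral>\<^sup>+y. grad_sq M h g y \<partial>M)"
    using assms by (rule nn_integral_square_le_grad_sq)
  also have "\<dots> \<le> ennreal (2 * CP * R^2) * (ennreal (1/c1) * kernel_energy M p g)"
    using grad by (rule mult_left_mono) simp
  also have "\<dots> \<le> ennreal (2 * CP * R^2) * (ennreal (1/c1) * (ennreal (1/\<alpha>) * two_step_energy M p g))"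
    using kernel_energy_le_two_step_energy[OF _ \<alpha>_pos kernel_dominated[unfolded p2_def]]
    by (intro mult_left_mono) simp_all
  also have "\<dots> \<le> ennreal (2 * CP * R^2) * (ennreal (1/c1) * (ennreal (1/\<alpha>) * (4 * conditional_variance M p g)))"
    using two_step_energy_le_conditional_variance by (intro mult_left_mono) simp_all
  also have "\<dots> = ennreal (2 * CP * R^2 * (1/c1) * (1/\<alpha>) * 4) * conditional_variance M p g"
  proof -
    have "ennreal a * (ennreal b * (ennreal c * (4 * V))) = ennreal (a * b * c * 4) * V"
      if "0 \<le> a" "0 \<le> b" "0 \<le> c" for a b c and V :: ennreal
      using that by (simp add: ennreal_mult mult_ac)
    then show ?thesis using CP_pos c1_pos \<alpha>_pos by simp
  qed
  also have "2 * CP * R^2 * (1/c1) * (1/\<alpha>) * 4 = 8 * CP * R^2 / (c1 * \<alpha>)"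
    by simp
  finally show ?thesis .
qed

lemma nn_integral_markov_op_square_le:
  assumes [measurable]: "g \<in> borel_measurable M"
    and "\<And>y. y \<notin> cball x r \<Longrightarrow> g y = 0"
    and "cball x r \<subseteq> cball x R" "2 * measure M (cball x r) \<le> measure M (cball x R)" "rP \<le> R"
    and norm_g: "(\<integral>\<^sup>+y. ennreal ((g y)^2) \<partial>M) = 1"
  shows "(\<integral>\<^sup>+z. ennreal ((markov_op M p g z)^2) \<partial>M) + ennreal (c1 * \<alpha> / (8 * CP * R^2)) \<le> 1"
proof -
  let ?N = "\<integral>\<^sup>+z. ennreal ((markov_op M p g z)^2) \<partial>M"
  have split: "conditional_variance M p g + ?N = 1"
    using conditional_variance_add_norm[of g] norm_g by simp
  have "conditional_variance M p g \<le> 1" using split by (metis add_increasing2 order_refl zero_le)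
  moreover have "?N \<le> 1" using split by (metis add_increasing order_refl zero_le)
  ultimately obtain v w where vw: "conditional_variance M p g = ennreal v" "?N = ennreal w" "0 \<le> v" "0 \<le> w"
    using ennreal_cases[of "conditional_variance M p g"] ennreal_cases[of ?N] by (metis top_unique ennreal_one_neq_top)
  with split have "v + w = 1" by (simp add: ennreal_plus[symmetric] del: ennreal_plus)
  define \<kappa> where "\<kappa> = 8 * CP * R^2 / (c1 * \<alpha>)"
  have "0 < \<kappa>" using CP_pos c1_pos \<alpha>_pos rP_pos \<open>rP \<le> R\<close> by (simp add: \<kappa>_def)
  have "(\<integral>\<^sup>+y. ennreal ((g y)^2) \<partial>M) \<le> ennreal \<kappa> * conditional_variance M p g"
    unfolding \<kappa>_def using assms by (intro nn_integral_square_le_conditional_variance)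
  then have "ennreal 1 \<le> ennreal (\<kappa> * v)"
    using norm_g vw \<open>0 < \<kappa>\<close> by (simp add: ennreal_mult)
  then have "1 \<le> \<kappa> * v" using \<open>0 < \<kappa>\<close> vw(3) by (subst (asm) ennreal_le_iff) simp_all
  then have "1 / \<kappa> \<le> v" using \<open>0 < \<kappa>\<close> by (simp add: divide_le_eq mult.commute)
  then have "w + 1 / \<kappa> \<le> 1" using \<open>v + w = 1\<close> by linarith
  moreover have "0 \<le> c1 * \<alpha> / (8 * CP * R^2)" using c1_pos \<alpha>_pos CP_pos by simp
  ultimately show ?thesis
    using vw by (simp add: \<kappa>_def ennreal_plus[symmetric] del: ennreal_plus)
qed

lemma L2_norm_P_on_cball_le:
  assumes "cball x r \<subseteq> cball x R" "2 * measure M (cball x r) \<le> measure M (cball x R)" "rP \<le> R"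
    and f: "in_L2_on M (cball x r) f" "L2_norm_on M (cball x r) f = 1"
  shows "L2_norm_on M (cball x r) (P_on M p (cball x r) f) \<le> 1 - c1 * \<alpha> / (16 * CP * R^2)"
proof -
  let ?B = "cball x r" and ?t = "c1 * \<alpha> / (8 * CP * R^2)"
  define g where "g y = indicator ?B y * f y" for y
  have [measurable]: "f \<in> borel_measurable M" using f by (simp add: in_L2_on_def)
  then have [measurable]: "g \<in> borel_measurable M" unfolding g_def by measurable
  have "integrable M (\<lambda>y. indicator ?B y *\<^sub>R (f y)^2)"
    using f by (simp add: in_L2_on_def set_integrable_def)
  then have "(\<integral>\<^sup>+y. ennreal (indicator ?B y *\<^sub>R (f y)^2) \<partial>M) = ennreal (LINT y:?B|M. (f y)^2)"
    unfolding set_lebesgue_integral_def by (rule nn_integral_eq_integral) simp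
  moreover have "(g y)^2 = indicator ?B y *\<^sub>R (f y)^2" for y by (simp add: g_def indicator_def)
  ultimately have "(\<integral>\<^sup>+y. ennreal ((g y)^2) \<partial>M) = 1"
    using f(2) by (simp add: L2_norm_on_def)
  then have gap: "(\<integral>\<^sup>+z. ennreal ((markov_op M p g z)^2) \<partial>M) + ennreal ?t \<le> 1"
    using assms by (intro nn_integral_markov_op_square_le) (auto simp: g_def)
  have P_eq: "P_on M p ?B f y = markov_op M p g y" for y
    unfolding P_on_def markov_op_def set_lebesgue_integral_def g_def by (simp add: mult.assoc)
  have "ennreal (LINT y:?B|M. (P_on M p ?B f y)^2)
      \<le> (\<integral>\<^sup>+y. ennreal (indicator ?B y *\<^sub>R (markov_op M p g y)^2) \<partial>M)"
    unfolding set_lebesgue_integral_def P_eq by (intro ennreal_integral_le_nn_integral) simp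
  also have "\<dots> \<le> (\<integral>\<^sup>+z. ennreal ((markov_op M p g z)^2) \<partial>M)"
    by (intro nn_integral_mono ennreal_leI) (simp add: indicator_def)
  finally have "ennreal (LINT y:?B|M. (P_on M p ?B f y)^2) + ennreal ?t \<le> 1"
    using gap by (meson add_right_mono order_trans)
  moreover have "0 \<le> (LINT y:?B|M. (P_on M p ?B f y)^2)" "0 \<le> ?t"
    using c1_pos \<alpha>_pos CP_pos unfolding set_lebesgue_integral_def by (auto intro: integral_nonneg_AE)
  ultimately have "sqrt (LINT y:?B|M. (P_on M p ?B f y)^2) \<le> 1 - ?t / 2"
    by (intro sqrt_le_one_minus_half) (simp_all add: ennreal_plus[symmetric] del: ennreal_plus)
  then show ?thesis by (simp add: L2_norm_on_def)
qed

theorem op_norm_on_cball_le: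
  "\<exists>a>0. \<exists>\<epsilon>0>0. \<forall>x r. h' \<le> r \<longrightarrow> ereal r \<le> ereal \<epsilon>0 * diamM TYPE('a) \<longrightarrow>
     op_norm_on M p (cball x r) \<le> ereal (1 - a / r^2)"
proof -
  obtain \<epsilon>0 L where "0 < \<epsilon>0" "1 \<le> L"
    and radius: "\<And>x r. h' \<le> r \<Longrightarrow> ereal r \<le> ereal \<epsilon>0 * diamM TYPE('a) \<Longrightarrow>
       \<exists>R. r \<le> R \<and> rP \<le> R \<and> R \<le> L * r \<and> 2 * measure M (cball x r) \<le> measure M (cball x R)"
    using doubling_radius[OF rP_pos] by blast
  define a where "a = c1 * \<alpha> / (16 * CP * L^2)"
  have "op_norm_on M p (cball x r) \<le> ereal (1 - a / r^2)"
    if r: "h' \<le> r" and small: "ereal r \<le> ereal \<epsilon>0 * diamM TYPE('a)" for x r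
  proof -
    obtain R where R: "r \<le> R" "rP \<le> R" "R \<le> L * r" "2 * measure M (cball x r) \<le> measure M (cball x R)"
      using radius[OF r small] by blast
    have "0 < r" using r h'_pos by simp
    then have "R^2 \<le> L^2 * r^2" using R by (simp add: power_mult_distrib[symmetric] power_mono)
    then have "16 * CP * R^2 \<le> 16 * CP * (L^2 * r^2)" using CP_pos by simp
    then have "c1 * \<alpha> / (16 * CP * (L^2 * r^2)) \<le> c1 * \<alpha> / (16 * CP * R^2)"
      using c1_pos \<alpha>_pos CP_pos \<open>0 < r\<close> R(1) \<open>1 \<le> L\<close> by (intro divide_left_mono) auto
    then have "a / r^2 \<le> c1 * \<alpha> / (16 * CP * R^2)" by (simp add: a_def mult.assoc)
    moreover have "L2_norm_on M (cball x r) (P_on M p (cball x r) f) \<le> 1 - c1 * \<alpha> / (16 * CP * R^2)"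
      if "in_L2_on M (cball x r) f" "L2_norm_on M (cball x r) f = 1" for f
      using R that by (intro L2_norm_P_on_cball_le) auto
    ultimately show ?thesis
      unfolding op_norm_on_def by (intro SUP_least) force
  qed
  moreover have "0 < a" using c1_pos \<alpha>_pos CP_pos \<open>1 \<le> L\<close> by (simp add: a_def)
  ultimately show ?thesis using \<open>0 < \<epsilon>0\<close> by blast
qed

end

theorem (in markov_poincare_space) spectral_gap_on_balls:
  "\<exists>a>0. \<exists>\<epsilon>0>0. \<forall>x r. h' \<le> r \<longrightarrow> ereal r \<le> ereal \<epsilon>0 * diamM TYPE('a) \<longrightarrow>
     op_norm_on M p (cball x r) \<le> ereal (1 - a / r^2)"
proof -
  obtain c1 C1 where "0 < c1" and two_sided: "\<forall>x. AE y in M. c1 / measure M (cball x h) * indicator (cball x h) y \<le> p x y \<and>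
      p x y \<le> C1 / measure M (cball x h') * indicator (cball x h') y"
    using compat unfolding compatible_def by blast
  obtain \<alpha> where "0 < \<alpha>" "AE w in M \<Otimes>\<^sub>M M. \<alpha> * p (fst w) (snd w) \<le> p2 M p (fst w) (snd w)"
    using compat unfolding compatible_def by blast
  moreover obtain CP C2 rP where "0 < CP" "0 < rP" "\<forall>f x r. L_infty_loc M f \<longrightarrow> rP \<le> r \<longrightarrow>
     (\<integral>\<^sup>+y. indicator (cball x r) y * ennreal ((f y - ball_avg M f (cball x r))^2) \<partial>M)
       \<le> ennreal (CP * r^2) * (\<integral>\<^sup>+y. indicator (cball x (C2 * r)) y * grad_sq M h f y \<partial>M)"
    using poincare unfolding poincare_h_def by blast
  moreover have "AE y in M. c1 / measure M (cball x h) * indicator (cball x h) y \<le> p x y" for x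
    using two_sided by (auto elim: eventually_mono)
  ultimately interpret markov_poincare_constants M p b h h' c1 \<alpha> CP C2 rP
    using \<open>0 < c1\<close> by unfold_locales auto
  show ?thesis by (rule op_norm_on_cball_le)
qed

theorem proposition8p4:
  fixes M :: "'a::metric_space measure"
    and p :: "'a \<Rightarrow> 'a \<Rightarrow> real"
    and b h h' :: real
  assumes "metric_measure_space M"
    and "0 < b"
    and "quasi_b_geodesic b TYPE('a)"
    and "VD_loc M" and "VD_infty M"
    and "poincare_h M h"
    and "markov_kernel M p"
    and "compatible M p h h'"
    and "h > b"
  shows "\<exists>a>0. \<exists>\<epsilon>0>0. \<forall>x r. h' \<le> r \<longrightarrow> ereal r \<le> ereal \<epsilon>0 * diamM TYPE('a) \<longrightarrow>
           op_norm_on M p (cball x r) \<le> ereal (1 - a / r^2)"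
proof -
  interpret markov_poincare_space M p b h h'
    using assms by unfold_locales
  show ?thesis by (rule spectral_gap_on_balls)
qed

end
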